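(* Define $f:\mathbb{Z}_{\ge 1}\to\mathbb{R}$ by $f(1)=1$, $f(2)=f(3)=2$, and for $n \ge 4$: $f(n)=4\cdot 3^{n/5-1}$ if $n\equiv 0 \pmod 5$; $f(n)=5\cdot 3^{(n-6)/5}$ if $n\equiv 1 \pmod 5$; $f(n)=2\cdot 3^{(n-2)/5}$ if $n\equiv 2 \pmod 5$; $f(n)=8\cdot 3^{(n-8)/5}$ if $n\equiv 3 \pmod 5$; $f(n)=3^{(n+1)/5}$ if $n\equiv 4 \pmod 5$. Then: (a) for all integers $n,m \ge 2$ with $(n,m)\neq(3,3)$, $f(n)f(m) \ge f(n+m)$; and (b) for all integers $n,m \ge 5$, $f(n-1)f(m-1) \ge f(n+m-1)$. *)

theory Defs
  imports Complex_Main
begin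

text \<open>The function f on positive integers (value at 0 is an irrelevant convention).
  For n >= 4 all exponents below are nonnegative integers, so nat division is exact.\<close>
definition f :: "nat \<Rightarrow> real" where
  "f n = (if n = 0 then 0
          else if n = 1 then 1
          else if n = 2 \<or> n = 3 then 2
          else if n mod 5 = 0 then 4 * 3 ^ (n div 5 - 1)
          else if n mod 5 = 1 then 5 * 3 ^ ((n - 6) div 5)
          else if n mod 5 = 2 then 2 * 3 ^ ((n - 2) div 5)
          else if n mod 5 = 3 then 8 * 3 ^ ((n - 8) div 5)
          else 3 ^ ((n + 1) div 5))"

end

theory Submission
  imports Defs
begin

text \<open>From 4 on, f is multiplied by 3 when the argument grows by 5. So if a \<ge> 9, replacing a by
  a - 5 in f (a + b + c) \<le> f a * f b divides both sides by 3, and by induction on a + b every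
  instance of the two inequalities reduces to one with both arguments below 9, a finite check.\<close>

lemma f_add_5:
  assumes "4 \<le> n"
  shows "f (n + 5) = 3 * f n"
proof -
  obtain q r where n: "n = 5 * q + r" and r: "r = 0 \<or> r = 1 \<or> r = 2 \<or> r = 3 \<or> r = 4"
    by (rule that[of "n div 5" "n mod 5"]) (simp, presburger)
  consider "r = 4" | k where "q = Suc k" "r = 0 \<or> r = 1 \<or> r = 2 \<or> r = 3"
    using assms n r by (cases q) auto
  then show ?thesis
    unfolding n by cases (auto simp: f_def)
qed

lemma f_add_le_mult_add_5:
  assumes "4 \<le> a" and "f (a + b + c) \<le> f a * f b"
  shows "f (a + 5 + b + c) \<le> f (a + 5) * f b"
proof -
  have "f (a + 5 + b + c) = 3 * f (a + b + c)" "f (a + 5) = 3 * f a"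
    using f_add_5[of "a + b + c"] f_add_5[of a] assms(1) by (simp_all add: ac_simps)
  with assms(2) show ?thesis
    by simp
qed

lemma f_add_le_mult_reduce_below_9:
  fixes c :: nat
  assumes small: "\<And>a b. P a b \<Longrightarrow> a < 9 \<Longrightarrow> b < 9 \<Longrightarrow> f (a + b + c) \<le> f a * f b"
    and reduce_left: "\<And>a b. P a b \<Longrightarrow> 9 \<le> a \<Longrightarrow> P (a - 5) b"
    and reduce_right: "\<And>a b. P a b \<Longrightarrow> 9 \<le> b \<Longrightarrow> P a (b - 5)"
    and "P a b"
  shows "f (a + b + c) \<le> f a * f b"
  using \<open>P a b\<close>
proof (induction "a + b" arbitrary: a b rule: less_induct)
  case less
  consider "a < 9" "b < 9" | "9 \<le> a" | "9 \<le> b"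
    by linarith
  then show ?case
  proof cases
    case 1
    with less.prems show ?thesis by (rule small)
  next
    case 2
    have "f (a - 5 + b + c) \<le> f (a - 5) * f b"
      using 2 less by (intro less.hyps reduce_left) auto
    then have "f (a - 5 + 5 + b + c) \<le> f (a - 5 + 5) * f b"
      using 2 by (intro f_add_le_mult_add_5) auto
    with 2 show ?thesis
      by simp
  next
    case 3
    have "f (a + (b - 5) + c) \<le> f a * f (b - 5)"
      using 3 less by (intro less.hyps reduce_right) auto
    then have "f (b - 5 + 5 + a + c) \<le> f (b - 5 + 5) * f a"
      using 3 by (intro f_add_le_mult_add_5) (auto simp: ac_simps)
    with 3 show ?thesis
      by (simp add: ac_simps)
  qed
qed

lemma f_add_le_mult:
  assumes "2 \<le> a" "2 \<le> b" "(a, b) \<noteq> (3, 3)"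
  shows "f (a + b) \<le> f a * f b"
proof -
  have "f (a + b + 0) \<le> f a * f b"
  proof (rule f_add_le_mult_reduce_below_9[where P = "\<lambda>a b. 2 \<le> a \<and> 2 \<le> b \<and> (a, b) \<noteq> (3, 3)"])
    fix a b :: nat
    assume "2 \<le> a \<and> 2 \<le> b \<and> (a, b) \<noteq> (3, 3)" "a < 9" "b < 9"
    then have "a \<in> {2, 3, 4, 5, 6, 7, 8}" "b \<in> {2, 3, 4, 5, 6, 7, 8}" "(a, b) \<noteq> (3, 3)"
      by auto
    then show "f (a + b + 0) \<le> f a * f b"
      by (simp only: insert_iff empty_iff) (elim disjE; simp add: f_def)
  qed (use assms in auto)
  then show ?thesis by simp
qed

lemma f_add_Suc_le_mult:
  assumes "4 \<le> a" "4 \<le> b"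
  shows "f (a + b + 1) \<le> f a * f b"
proof (rule f_add_le_mult_reduce_below_9[where P = "\<lambda>a b. 4 \<le> a \<and> 4 \<le> b"])
  fix a b :: nat
  assume "4 \<le> a \<and> 4 \<le> b" "a < 9" "b < 9"
  then have "a \<in> {4, 5, 6, 7, 8}" "b \<in> {4, 5, 6, 7, 8}"
    by auto
  then show "f (a + b + 1) \<le> f a * f b"
    by (simp only: insert_iff empty_iff) (elim disjE; simp add: f_def)
qed (use assms in auto)

theorem lemma4p1:
  shows "(\<forall>n m :: nat. n \<ge> 2 \<and> m \<ge> 2 \<and> (n, m) \<noteq> (3, 3) \<longrightarrow> f n * f m \<ge> f (n + m))
       \<and> (\<forall>n m :: nat. n \<ge> 5 \<and> m \<ge> 5 \<longrightarrow> f (n - 1) * f (m - 1) \<ge> f (n + m - 1))"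
proof (intro conjI allI impI)
  fix n m :: nat
  assume "n \<ge> 2 \<and> m \<ge> 2 \<and> (n, m) \<noteq> (3, 3)"
  then show "f n * f m \<ge> f (n + m)"
    using f_add_le_mult by blast
next
  fix n m :: nat
  assume nm: "n \<ge> 5 \<and> m \<ge> 5"
  then have "f ((n - 1) + (m - 1) + 1) \<le> f (n - 1) * f (m - 1)"
    by (intro f_add_Suc_le_mult) auto
  moreover have "(n - 1) + (m - 1) + 1 = n + m - 1"
    using nm by linarith
  ultimately show "f (n - 1) * f (m - 1) \<ge> f (n + m - 1)"
    by (simp only:)
qed

end
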